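(* Let $K>0$, let $H_1,H_2$ be real Hilbert spaces, let $B=H_1\times H_2$ with the symmetric bilinear form $\lfloor (x_1,x_2),(y_1,y_2)\rfloor=K^2\langle x_1,y_1\rangle_{H_1}-\langle x_2,y_2\rangle_{H_2}$, and let $q(b)=\frac12\lfloor b,b\rfloor$. Then: (1) a nonempty set $A\subset B$ is $q$-positive if and only if $A$ is the graph of a $K$-Lipschitz mapping $f:P_{H_1}(A)\to H_2$, where $P_{H_1}(A)=\{x_1:\exists x_2,\ (x_1,x_2)\in A\}$; (2) a set $A\subset B$ is maximally $q$-positive if and only if $A$ is the graph of a $K$-Lipschitz mapping $f:H_1\to H_2$.
   Context: A nonempty $A\subset B$ is $q$-positive if $q(b-c)\ge0$ for all $b,c\in A$; maximally $q$-positive if $q$-positive and not properly contained in another $q$-positive set. A mapping $f:D\to H_2$, $D\subset H_1$, is $K$-Lipschitz if $\|f(x)-f(y)\|_{H_2}\le K\|x-y\|_{H_1}$ for all $x,y\in D$. *)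

theory Defs
  imports "HOL-Analysis.Analysis"
begin

definition bform :: "real \<Rightarrow> ('a::real_inner \<times> 'b::real_inner) \<Rightarrow> ('a \<times> 'b) \<Rightarrow> real" where
  "bform K b c = K\<^sup>2 * (fst b \<bullet> fst c) - (snd b \<bullet> snd c)"

definition qform :: "real \<Rightarrow> ('a::real_inner \<times> 'b::real_inner) \<Rightarrow> real" where
  "qform K b = (1/2) * bform K b b"

definition q_positive :: "(('a::real_inner \<times> 'b::real_inner) \<Rightarrow> real) \<Rightarrow> ('a \<times> 'b) set \<Rightarrow> bool" where
  "q_positive q A \<longleftrightarrow> A \<noteq> {} \<and> (\<forall>b\<in>A. \<forall>c\<in>A. q (b - c) \<ge> 0)"

definition max_q_positive :: "(('a::real_inner \<times> 'b::real_inner) \<Rightarrow> real) \<Rightarrow> ('a \<times> 'b) set \<Rightarrow> bool" where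
  "max_q_positive q A \<longleftrightarrow> q_positive q A \<and> (\<forall>A'. q_positive q A' \<and> A \<subseteq> A' \<longrightarrow> A' = A)"

definition K_lipschitz_on :: "real \<Rightarrow> 'a::real_normed_vector set \<Rightarrow> ('a \<Rightarrow> 'b::real_normed_vector) \<Rightarrow> bool" where
  "K_lipschitz_on K D f \<longleftrightarrow> (\<forall>x\<in>D. \<forall>y\<in>D. norm (f x - f y) \<le> K * norm (x - y))"

definition graph_on :: "'a set \<Rightarrow> ('a \<Rightarrow> 'b) \<Rightarrow> ('a \<times> 'b) set" where
  "graph_on D f = {(x, f x) | x. x \<in> D}"

end

theory Submission
  imports Defs
begin

text \<open>
  Since \<open>2 q (b - c) = K\<^sup>2 \<parallel>x - x'\<parallel>\<^sup>2 - \<parallel>y - y'\<parallel>\<^sup>2\<close> for \<open>b = (x, y)\<close>, \<open>c = (x', y')\<close>,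
  a set is q-positive iff it is the graph of a K-Lipschitz map on its projection, which gives (1).
  A maximal such graph is one whose map admits no K-Lipschitz extension to a further point, so (2)
  amounts to the one-point case of Kirszbraun's theorem: after rescaling, the closed balls
  \<open>cball (f x) \<parallel>x - x0\<parallel>\<close> have a common point.

  For finitely many balls, minimise the largest ratio \<open>dist y (f x) / \<parallel>x - x0\<parallel>\<close> over the convex
  hull of the centres. A minimiser y lies in the convex hull of the centres attaining the maximal
  ratio L (otherwise moving towards that hull decreases all ratios). Writing 0 as a convex
  combination of the vectors \<open>f x - y\<close>, whose lengths are L times those of \<open>x - x0\<close>, and expanding
  the square of its norm with the 1-Lipschitz bound forces \<open>L \<le> 1\<close>.
  Completeness passes to arbitrary families: by the parallelogram law, points of almost minimal
  norm in larger and larger finite intersections form a Cauchy sequence whose limit lies in every ball.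
\<close>

section \<open>Kirszbraun's theorem for finitely many balls\<close>

lemma continuous_on_Max_finite:
  fixes g :: "'i \<Rightarrow> 'a::topological_space \<Rightarrow> real"
  assumes "finite I" "I \<noteq> {}" "\<And>i. i \<in> I \<Longrightarrow> continuous_on S (g i)"
  shows "continuous_on S (\<lambda>y. Max ((\<lambda>i. g i y) ` I))"
  using assms
proof (induction I rule: finite_ne_induct)
  case (insert i I)
  then have "continuous_on S (\<lambda>y. max (g i y) (Max ((\<lambda>i. g i y) ` I)))"
    by (intro continuous_on_max) auto
  then show ?case using insert by simp
qed simp

lemma convex_hull_image_weights:
  fixes c :: "'i \<Rightarrow> 'a::real_vector"
  assumes "finite A" "y \<in> convex hull (c ` A)"
  obtains \<mu> where "\<And>i. i \<in> A \<Longrightarrow> 0 \<le> \<mu> i" "sum \<mu> A = 1" "(\<Sum>i\<in>A. \<mu> i *\<^sub>R c i) = y"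
proof -
  obtain u where u: "\<And>z. z \<in> c ` A \<Longrightarrow> 0 \<le> u z" "sum u (c ` A) = 1" "(\<Sum>z\<in>c ` A. u z *\<^sub>R z) = y"
    using assms by (auto simp: convex_hull_finite)
  define m where "m z = card {i\<in>A. c i = z}" for z
  have m_pos: "m z > 0" if "z \<in> c ` A" for z
    using that \<open>finite A\<close> by (auto simp: m_def card_gt_0_iff)
  define \<mu> where "\<mu> i = u (c i) / m (c i)" for i
  have fibre: "(\<Sum>i\<in>{i\<in>A. c i = z}. \<mu> i) = u z" if "z \<in> c ` A" for z
    using m_pos[OF that] by (simp add: \<mu>_def m_def)
  have fibre_scaleR: "(\<Sum>i\<in>{i\<in>A. c i = z}. \<mu> i *\<^sub>R c i) = u z *\<^sub>R z" if "z \<in> c ` A" for z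
    using fibre[OF that] by (simp add: scaleR_sum_left[symmetric])
  show ?thesis
  proof
    show "0 \<le> \<mu> i" if "i \<in> A" for i using u(1) that by (simp add: \<mu>_def)
    show "sum \<mu> A = 1"
      using u(2) fibre by (simp add: sum.image_gen[OF \<open>finite A\<close>, of \<mu> c])
    show "(\<Sum>i\<in>A. \<mu> i *\<^sub>R c i) = y"
      using u(3) fibre_scaleR by (simp add: sum.image_gen[OF \<open>finite A\<close>, of "\<lambda>i. \<mu> i *\<^sub>R c i" c])
  qed
qed

lemma dist_add_scaleR_less:
  fixes w y c :: "'a::real_inner"
  assumes "w \<noteq> 0" "norm w ^ 2 \<le> w \<bullet> (c - y)" "0 < t" "t < 1"
  shows "dist (y + t *\<^sub>R w) c < dist y c"
proof -
  have "dist (y + t *\<^sub>R w) c ^ 2 = dist y c ^ 2 - 2 * t * (w \<bullet> (c - y)) + t ^ 2 * norm w ^ 2"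
    unfolding dist_norm power2_norm_eq_inner
    by (simp add: inner_add_left inner_add_right inner_diff_left inner_diff_right inner_commute
        algebra_simps power2_eq_square)
  also have "\<dots> < dist y c ^ 2"
  proof -
    have "t * norm w ^ 2 < 2 * norm w ^ 2" using assms by simp
    then have "t ^ 2 * norm w ^ 2 < 2 * t * norm w ^ 2"
      using \<open>0 < t\<close> by (simp add: power2_eq_square algebra_simps)
    moreover have "2 * t * norm w ^ 2 \<le> 2 * t * (w \<bullet> (c - y))" using assms by simp
    ultimately show ?thesis by linarith
  qed
  finally show ?thesis by (simp add: power_less_imp_less_base)
qed

definition max_dist_ratio :: "'i set \<Rightarrow> ('i \<Rightarrow> 'a::metric_space) \<Rightarrow> ('i \<Rightarrow> real) \<Rightarrow> 'a \<Rightarrow> real" where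
  "max_dist_ratio D c r y = Max ((\<lambda>i. dist y (c i) / r i) ` D)"

lemma max_dist_ratio_descent:
  fixes c :: "'i \<Rightarrow> 'a::real_inner"
  assumes D: "finite D" "D \<noteq> {}" and r: "\<And>i. i \<in> D \<Longrightarrow> r i > 0" and "w \<noteq> 0"
    and active: "\<And>i. i \<in> D \<Longrightarrow> dist y (c i) / r i = max_dist_ratio D c r y \<Longrightarrow> norm w ^ 2 \<le> w \<bullet> (c i - y)"
  obtains t where "0 < t" "t < 1" "max_dist_ratio D c r (y + t *\<^sub>R w) < max_dist_ratio D c r y"
proof -
  define L where "L = max_dist_ratio D c r y"
  have "\<forall>\<^sub>F t in at_right 0. \<forall>i\<in>D. dist (y + t *\<^sub>R w) (c i) / r i < L"
  proof (intro eventually_ball_finite D ballI)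
    fix i assume i: "i \<in> D"
    show "\<forall>\<^sub>F t in at_right 0. dist (y + t *\<^sub>R w) (c i) / r i < L"
    proof (cases "dist y (c i) / r i = L")
      case True
      have "dist (y + t *\<^sub>R w) (c i) / r i < L" if "0 < t" "t < 1" for t
        using divide_strict_right_mono[OF dist_add_scaleR_less[OF \<open>w \<noteq> 0\<close> active[OF i] that] r[OF i]]
          True by (simp add: L_def)
      then show ?thesis unfolding eventually_at_right_field by (intro exI[of _ 1]) auto
    next
      case False
      then have "dist y (c i) / r i < L"
        using i D unfolding L_def max_dist_ratio_def by (auto intro: Max_ge le_neq_trans)
      moreover have "((\<lambda>t. dist (y + t *\<^sub>R w) (c i) / r i) \<longlongrightarrow> dist (y + 0 *\<^sub>R w) (c i) / r i) (at_right 0)"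
        using r[OF i] by (intro tendsto_intros) auto
      ultimately show ?thesis by (simp add: order_tendstoD(2))
    qed
  qed
  moreover have "\<forall>\<^sub>F t in at_right 0. 0 < t \<and> t < (1::real)"
    unfolding eventually_at_right_field by (intro exI[of _ 1]) auto
  ultimately obtain t where t: "0 < t" "t < 1" "\<forall>i\<in>D. dist (y + t *\<^sub>R w) (c i) / r i < L"
    using eventually_happens'[OF trivial_limit_at_right_real eventually_conj] by blast
  moreover have "max_dist_ratio D c r (y + t *\<^sub>R w) < L"
    using t(3) D by (simp add: max_dist_ratio_def)
  ultimately show ?thesis using that unfolding L_def by blast
qed

lemma minimiser_of_max_dist_ratio_in_active_hull:
  fixes c :: "'i \<Rightarrow> 'a::real_inner"
  assumes D: "finite D" and r: "\<And>i. i \<in> D \<Longrightarrow> r i > 0" and y: "y \<in> convex hull (c ` D)"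
    and min: "\<And>z. z \<in> convex hull (c ` D) \<Longrightarrow> max_dist_ratio D c r y \<le> max_dist_ratio D c r z"
  shows "y \<in> convex hull (c ` {i\<in>D. dist y (c i) / r i = max_dist_ratio D c r y})"
    (is "y \<in> convex hull (c ` ?A)")
proof (rule ccontr)
  assume y_notin: "y \<notin> convex hull (c ` ?A)"
  have "D \<noteq> {}" using y by auto
  then have "max_dist_ratio D c r y \<in> (\<lambda>i. dist y (c i) / r i) ` D"
    unfolding max_dist_ratio_def using D by (intro Max_in) auto
  then have "?A \<noteq> {}" by auto
  define H where "H = convex hull (c ` ?A)"
  have "compact H" "H \<noteq> {}" unfolding H_def using D \<open>?A \<noteq> {}\<close>
    by (auto intro: finite_imp_compact_convex_hull)
  then obtain p where p: "p \<in> H" "\<And>z. z \<in> H \<Longrightarrow> dist y p \<le> dist y z"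
    using continuous_attains_inf[of H "dist y"] continuous_on_dist[OF continuous_on_const continuous_on_id]
    by blast
  define w where "w = p - y"
  have "w \<noteq> 0" using p(1) y_notin by (auto simp: w_def H_def)
  have active: "norm w ^ 2 \<le> w \<bullet> (c i - y)" if "i \<in> ?A" for i
  proof -
    have "(y - p) \<bullet> (c i - p) \<le> 0"
      using p that \<open>compact H\<close> unfolding H_def
      by (intro any_closest_point_dot) (auto intro: hull_inc compact_imp_closed)
    then show ?thesis by (simp add: w_def power2_norm_eq_inner inner_diff_left inner_diff_right inner_commute)
  qed
  obtain t where t: "0 < t" "t < 1" "max_dist_ratio D c r (y + t *\<^sub>R w) < max_dist_ratio D c r y"
    by (rule max_dist_ratio_descent[where c = c and r = r and w = w and y = y])
      (use D \<open>D \<noteq> {}\<close> r \<open>w \<noteq> 0\<close> active in auto)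
  have "H \<subseteq> convex hull (c ` D)" unfolding H_def by (intro hull_mono) auto
  then have "(1 - t) *\<^sub>R y + t *\<^sub>R p \<in> convex hull (c ` D)"
    using y p(1) t by (intro convexD) auto
  then have "y + t *\<^sub>R w \<in> convex hull (c ` D)" by (simp add: w_def algebra_simps)
  with t(3) min show False by fastforce
qed

lemma double_sum_inner:
  fixes a :: "'i \<Rightarrow> 'a::real_inner"
  shows "(\<Sum>i\<in>A. \<Sum>j\<in>A. \<mu> i * \<mu> j * (a i \<bullet> a j)) = (\<Sum>i\<in>A. \<mu> i *\<^sub>R a i) \<bullet> (\<Sum>i\<in>A. \<mu> i *\<^sub>R a i)"
  by (simp add: inner_sum_left inner_sum_right sum_distrib_left mult.assoc)
    (subst sum.swap, simp add: inner_commute mult.left_commute)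

lemma double_sum_weights_add:
  fixes n :: "'i \<Rightarrow> real"
  assumes "sum \<mu> A = 1"
  shows "(\<Sum>i\<in>A. \<Sum>j\<in>A. \<mu> i * \<mu> j * (n i + n j)) = 2 * (\<Sum>i\<in>A. \<mu> i * n i)"
proof -
  have "(\<Sum>i\<in>A. \<Sum>j\<in>A. \<mu> i * \<mu> j * (n i + n j))
      = (\<Sum>i\<in>A. \<mu> i * n i * sum \<mu> A + \<mu> i * (\<Sum>j\<in>A. \<mu> j * n j))"
    by (simp add: sum.distrib sum_distrib_left algebra_simps)
  also have "\<dots> = 2 * (\<Sum>i\<in>A. \<mu> i * n i)"
    using assms by (simp add: sum.distrib sum_distrib_right[symmetric])
  finally show ?thesis .
qed

lemma inner_ge_of_equal_stretch:
  fixes v v' :: "'b::real_inner" and a a' :: "'a::real_inner"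
  assumes "norm (v - v') \<le> norm (a - a')" "norm v = L * norm a" "norm v' = L * norm a'"
  shows "(L\<^sup>2 - 1) / 2 * norm a ^ 2 + (L\<^sup>2 - 1) / 2 * norm a' ^ 2 + a \<bullet> a' \<le> v \<bullet> v'"
proof -
  have sq: "norm (x - y) ^ 2 = norm x ^ 2 + norm y ^ 2 - 2 * (x \<bullet> y)" for x y :: "'c::real_inner"
    by (simp add: power2_norm_eq_inner inner_diff_left inner_diff_right inner_commute)
  have "norm (v - v') ^ 2 \<le> norm (a - a') ^ 2" using assms(1) by (simp add: power_mono)
  moreover have "norm (v - v') ^ 2 = L\<^sup>2 * norm a ^ 2 + L\<^sup>2 * norm a' ^ 2 - 2 * (v \<bullet> v')"
    using sq[of v v'] assms(2,3) by (simp add: power_mult_distrib)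
  moreover have "(L\<^sup>2 - 1) / 2 * norm a ^ 2 + (L\<^sup>2 - 1) / 2 * norm a' ^ 2
      = (L\<^sup>2 * norm a ^ 2 + L\<^sup>2 * norm a' ^ 2 - norm a ^ 2 - norm a' ^ 2) / 2"
    by (simp add: field_simps)
  ultimately show ?thesis using sq[of a a'] by argo
qed

lemma stretch_le_1_if_zero_in_convex_hull:
  fixes v :: "'i \<Rightarrow> 'b::real_inner" and a :: "'i \<Rightarrow> 'a::real_inner"
  assumes A: "finite A" and \<mu>: "\<And>i. i \<in> A \<Longrightarrow> 0 \<le> \<mu> i" "sum \<mu> A = 1" "(\<Sum>i\<in>A. \<mu> i *\<^sub>R v i) = 0"
    and lip: "\<And>i j. i \<in> A \<Longrightarrow> j \<in> A \<Longrightarrow> norm (v i - v j) \<le> norm (a i - a j)"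
    and stretch: "\<And>i. i \<in> A \<Longrightarrow> norm (v i) = L * norm (a i)"
    and a: "\<And>i. i \<in> A \<Longrightarrow> a i \<noteq> 0"
  shows "L \<le> 1"
proof (rule ccontr)
  assume "\<not> L \<le> 1"
  define c where "c = (L\<^sup>2 - 1) / 2"
  have "1 < L * L" using \<open>\<not> L \<le> 1\<close> by (simp add: less_1_mult)
  then have "c > 0" by (simp add: c_def power2_eq_square)
  have pair: "c * norm (a i) ^ 2 + c * norm (a j) ^ 2 + a i \<bullet> a j \<le> v i \<bullet> v j" if "i \<in> A" "j \<in> A" for i j
    unfolding c_def using that by (intro inner_ge_of_equal_stretch lip stretch)
  have "0 < (\<Sum>i\<in>A. \<mu> i * norm (a i) ^ 2)"
  proof -
    obtain i0 where "i0 \<in> A" "\<mu> i0 \<noteq> 0" using \<mu>(2) by (metis sum.neutral zero_neq_one)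
    then show ?thesis using a \<mu>(1) by (intro sum_pos2[OF A, of i0]) (auto simp: order.strict_iff_order)
  qed
  then have "0 < 2 * (\<Sum>i\<in>A. \<mu> i * (c * norm (a i) ^ 2)) + (\<Sum>i\<in>A. \<mu> i *\<^sub>R a i) \<bullet> (\<Sum>i\<in>A. \<mu> i *\<^sub>R a i)"
    using \<open>c > 0\<close> by (simp add: add_pos_nonneg mult.left_commute flip: sum_distrib_left)
  also have "\<dots> = (\<Sum>i\<in>A. \<Sum>j\<in>A. \<mu> i * \<mu> j * (c * norm (a i) ^ 2 + c * norm (a j) ^ 2 + a i \<bullet> a j))"
  proof -
    have "(\<Sum>i\<in>A. \<Sum>j\<in>A. \<mu> i * \<mu> j * (c * norm (a i) ^ 2 + c * norm (a j) ^ 2 + a i \<bullet> a j))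
        = (\<Sum>i\<in>A. \<Sum>j\<in>A. \<mu> i * \<mu> j * (c * norm (a i) ^ 2 + c * norm (a j) ^ 2))
          + (\<Sum>i\<in>A. \<Sum>j\<in>A. \<mu> i * \<mu> j * (a i \<bullet> a j))"
      by (simp add: distrib_left sum.distrib)
    then show ?thesis
      by (simp only: double_sum_weights_add[OF \<mu>(2)] double_sum_inner)
  qed
  also have "\<dots> \<le> (\<Sum>i\<in>A. \<Sum>j\<in>A. \<mu> i * \<mu> j * (v i \<bullet> v j))"
    using pair \<mu>(1) by (intro sum_mono mult_left_mono) auto
  also have "\<dots> = 0" using \<mu>(3) by (simp add: double_sum_inner)
  finally show False by simp
qed

lemma finite_Kirszbraun_balls:
  fixes f :: "'a::real_inner \<Rightarrow> 'b::real_inner"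
  assumes D: "finite D" and x0: "x0 \<notin> D"
    and lip: "\<And>x x'. x \<in> D \<Longrightarrow> x' \<in> D \<Longrightarrow> dist (f x) (f x') \<le> dist x x'"
  shows "(\<Inter>x\<in>D. cball (f x) (dist x x0)) \<noteq> {}"
proof (cases "D = {}")
  case False
  define r where "r x = dist x x0" for x
  have r: "r x > 0" if "x \<in> D" for x using that x0 by (auto simp: r_def)
  define C where "C = convex hull (f ` D)"
  have "compact C" "C \<noteq> {}" using D False by (auto simp: C_def intro: finite_imp_compact_convex_hull)
  moreover have "continuous_on C (max_dist_ratio D f r)"
    unfolding max_dist_ratio_def using D False r
    by (intro continuous_on_Max_finite) (auto intro!: continuous_intros dest: less_imp_neq[symmetric])
  ultimately obtain y where y: "y \<in> C" "\<And>z. z \<in> C \<Longrightarrow> max_dist_ratio D f r y \<le> max_dist_ratio D f r z"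
    using continuous_attains_inf by metis
  define L where "L = max_dist_ratio D f r y"
  have ratio_le: "dist y (f x) / r x \<le> L" if "x \<in> D" for x
    using D that by (simp add: L_def max_dist_ratio_def)
  have "L \<le> 1"
  proof -
    define A where "A = {x\<in>D. dist y (f x) / r x = L}"
    have "finite A" using D by (simp add: A_def)
    moreover have "y \<in> convex hull (f ` A)"
      using minimiser_of_max_dist_ratio_in_active_hull[OF D r y[unfolded C_def]] by (simp add: A_def L_def)
    ultimately obtain \<mu> where \<mu>: "\<And>x. x \<in> A \<Longrightarrow> 0 \<le> \<mu> x" "sum \<mu> A = 1" "(\<Sum>x\<in>A. \<mu> x *\<^sub>R f x) = y"
      by (rule convex_hull_image_weights) auto
    show ?thesis
    proof (rule stretch_le_1_if_zero_in_convex_hull[of A \<mu> "\<lambda>x. f x - y" "\<lambda>x. x - x0"])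
      show "(\<Sum>x\<in>A. \<mu> x *\<^sub>R (f x - y)) = 0"
        using \<mu>(2,3) by (simp add: scaleR_diff_right sum_subtractf flip: scaleR_sum_left)
      show "norm (f x - y) = L * norm (x - x0)" if "x \<in> A" for x
        using that r[of x] by (auto simp: A_def r_def dist_norm norm_minus_commute field_simps)
    qed (use D \<mu> lip x0 in \<open>auto simp: A_def dist_norm\<close>)
  qed
  have "y \<in> cball (f x) (dist x x0)" if "x \<in> D" for x
  proof -
    have "dist y (f x) \<le> L * r x" using ratio_le[OF that] r[OF that] by (simp add: divide_le_eq)
    also have "\<dots> \<le> r x" using mult_right_mono[OF \<open>L \<le> 1\<close>, of "r x"] r[OF that] by simp
    finally show ?thesis by (simp add: r_def dist_commute)
  qed
  then show ?thesis by blast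
qed simp

section \<open>Closed convex sets in Hilbert space with the finite intersection property\<close>

definition inf_norm_sq :: "'a::real_normed_vector set \<Rightarrow> real" where
  "inf_norm_sq T = Inf ((\<lambda>p. norm p ^ 2) ` T)"

lemma inf_norm_sq_le: "p \<in> T \<Longrightarrow> inf_norm_sq T \<le> norm p ^ 2"
  unfolding inf_norm_sq_def by (intro cInf_lower bdd_belowI[of _ 0]) auto

lemma inf_norm_sq_approx:
  assumes "T \<noteq> {}" "e > 0"
  shows "\<exists>p\<in>T. norm p ^ 2 < inf_norm_sq T + e"
  using cInf_lessD[of "(\<lambda>p. norm p ^ 2) ` T" "inf_norm_sq T + e"] assms
  unfolding inf_norm_sq_def by auto

lemma inf_norm_sq_antimono: "T \<noteq> {} \<Longrightarrow> T \<subseteq> T' \<Longrightarrow> inf_norm_sq T' \<le> inf_norm_sq T"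
  unfolding inf_norm_sq_def[of T] using inf_norm_sq_le by (intro cInf_greatest) auto

lemma norm_diff_sq_le_inf_norm_sq:
  fixes p q :: "'a::real_inner"
  assumes "convex T" "p \<in> T" "q \<in> T"
  shows "norm (p - q) ^ 2 \<le> 2 * norm p ^ 2 + 2 * norm q ^ 2 - 4 * inf_norm_sq T"
proof -
  have "inf_norm_sq T \<le> norm ((1/2) *\<^sub>R p + (1/2) *\<^sub>R q) ^ 2"
    using assms by (intro inf_norm_sq_le convexD) auto
  moreover have "4 * norm ((1/2) *\<^sub>R p + (1/2) *\<^sub>R q) ^ 2 + norm (p - q) ^ 2 = 2 * norm p ^ 2 + 2 * norm q ^ 2"
    unfolding power2_norm_eq_inner
    by (simp add: inner_add_left inner_add_right inner_commute algebra_simps)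
  ultimately show ?thesis by linarith
qed

lemma finite_subsets_chain_approaching_SUP:
  fixes d :: "'i set \<Rightarrow> real" and D :: "'i set"
  defines "\<F> \<equiv> {F. finite F \<and> F \<subseteq> D}"
  assumes bdd: "bdd_above (d ` \<F>)" and mono: "\<And>F G. F \<subseteq> G \<Longrightarrow> G \<in> \<F> \<Longrightarrow> d F \<le> d G"
  obtains G where "\<And>n. G n \<in> \<F>" "incseq G" "\<And>n. (SUP F\<in>\<F>. d F) - inverse (Suc n) < d (G n)"
proof -
  have "\<F> \<noteq> {}" by (auto simp: \<F>_def)
  then have "\<exists>F\<in>\<F>. (SUP F\<in>\<F>. d F) - inverse (Suc n) < d F" for n
    using less_cSUP_iff[OF _ bdd, of "(SUP F\<in>\<F>. d F) - inverse (Suc n)"] by simp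
  then obtain F where F: "\<And>n. F n \<in> \<F>" "\<And>n. (SUP F\<in>\<F>. d F) - inverse (Suc n) < d (F n)" by metis
  define G where "G n = (\<Union>k\<le>n. F k)" for n
  show ?thesis
  proof
    show G: "G n \<in> \<F>" for n using F(1) by (auto simp: G_def \<F>_def)
    show "incseq G" by (force simp: G_def incseq_def)
    show "(SUP F\<in>\<F>. d F) - inverse (Suc n) < d (G n)" for n
      using F(2)[of n] mono[OF _ G, of "F n" n] by (force simp: G_def)
  qed
qed

lemma Cauchy_if_tail_bound:
  fixes X :: "nat \<Rightarrow> 'a::real_normed_vector"
  assumes bound: "\<And>m n. n \<le> m \<Longrightarrow> norm (X m - X n) \<le> \<delta> n" and "\<delta> \<longlonglongrightarrow> 0"
  shows "Cauchy X"
proof (rule CauchyI)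
  fix e :: real assume "0 < e"
  then have "eventually (\<lambda>n. \<delta> n < e) sequentially"
    using \<open>\<delta> \<longlonglongrightarrow> 0\<close> by (rule order_tendstoD(2)[rotated])
  then obtain N where N: "\<And>n. n \<ge> N \<Longrightarrow> \<delta> n < e"
    unfolding eventually_sequentially by blast
  have "norm (X m - X n) < e" if "m \<ge> N" "n \<ge> N" for m n
  proof (cases "n \<le> m")
    case True
    then show ?thesis using bound[OF True] N[OF \<open>n \<ge> N\<close>] by linarith
  next
    case False
    then have "norm (X n - X m) \<le> \<delta> m" by (intro bound) simp
    then show ?thesis using N[OF \<open>m \<ge> N\<close>] by (simp add: norm_minus_commute)
  qed
  then show "\<exists>M. \<forall>m\<ge>M. \<forall>n\<ge>M. norm (X m - X n) < e" by blast
qed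

lemma closed_contains_limit_of_near_sequence:
  fixes p q :: "nat \<Rightarrow> 'a::real_normed_vector"
  assumes "closed S" "p \<longlonglongrightarrow> P" "\<And>n. q n \<in> S" "\<And>n. norm (q n - p n) \<le> \<delta> n" "\<delta> \<longlonglongrightarrow> 0"
  shows "P \<in> S"
proof -
  have "(\<lambda>n. q n - p n) \<longlonglongrightarrow> 0"
    using assms(4) by (intro Lim_null_comparison[OF _ assms(5)] always_eventually) simp
  from tendsto_add[OF this assms(2)] have "q \<longlonglongrightarrow> P" by simp
  then show ?thesis using assms(1,3) closed_sequentially by blast
qed

lemma closed_convex_finite_intersection_property:
  fixes S :: "'i \<Rightarrow> 'a::{real_inner,complete_space} set"
  assumes closed: "\<And>i. i \<in> D \<Longrightarrow> closed (S i)" and convex: "\<And>i. i \<in> D \<Longrightarrow> convex (S i)"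
    and "i0 \<in> D" "bounded (S i0)"
    and fip: "\<And>F. finite F \<Longrightarrow> F \<subseteq> D \<Longrightarrow> (\<Inter>i\<in>F. S i) \<noteq> {}"
  shows "(\<Inter>i\<in>D. S i) \<noteq> {}"
proof -
  define \<F> where "\<F> = {F. finite F \<and> F \<subseteq> D}"
  define d where "d F = inf_norm_sq (\<Inter>i\<in>F. S i)" for F
  have d_mono: "d F \<le> d G" if "F \<subseteq> G" "G \<in> \<F>" for F G
    unfolding d_def using that fip by (intro inf_norm_sq_antimono) (auto simp: \<F>_def)
  obtain R where R: "\<And>p. p \<in> S i0 \<Longrightarrow> norm p \<le> R"
    using \<open>bounded (S i0)\<close> by (auto simp: bounded_iff)
  have "d F \<le> R ^ 2" if "F \<in> \<F>" for F
  proof -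
    have F': "insert i0 F \<in> \<F>" using that \<open>i0 \<in> D\<close> by (simp add: \<F>_def)
    then have "(\<Inter>i\<in>insert i0 F. S i) \<noteq> {}" using fip unfolding \<F>_def by blast
    then obtain p where p: "p \<in> (\<Inter>i\<in>insert i0 F. S i)" by blast
    have "d F \<le> d (insert i0 F)" using d_mono[OF _ F'] by blast
    also have "\<dots> \<le> norm p ^ 2" unfolding d_def using p by (rule inf_norm_sq_le)
    also have "\<dots> \<le> R ^ 2" using R p by (intro power_mono) auto
    finally show ?thesis .
  qed
  then have d_bdd: "bdd_above (d ` \<F>)" by (intro bdd_aboveI2)
  define s where "s = (SUP F\<in>\<F>. d F)"
  define \<epsilon> where "\<epsilon> n = inverse (real (Suc n))" for n
  have \<epsilon>_pos: "\<epsilon> n > 0" for n by (simp add: \<epsilon>_def)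
  obtain G where G: "\<And>n. G n \<in> \<F>" "incseq G" and G_d: "\<And>n. s - \<epsilon> n < d (G n)"
    using finite_subsets_chain_approaching_SUP[of d D, folded \<F>_def, OF d_bdd d_mono]
    unfolding s_def \<epsilon>_def by blast
  have near_min: "\<exists>p\<in>(\<Inter>i\<in>H. S i). norm p ^ 2 \<le> s + \<epsilon> n" if "H \<in> \<F>" for H n
  proof -
    have "(\<Inter>i\<in>H. S i) \<noteq> {}" using that by (intro fip) (auto simp: \<F>_def)
    from inf_norm_sq_approx[OF this \<epsilon>_pos[of n]]
    obtain p where p: "p \<in> (\<Inter>i\<in>H. S i)" "norm p ^ 2 < d H + \<epsilon> n"
      unfolding d_def by blast
    moreover have "d H \<le> s" unfolding s_def using that d_bdd by (rule cSUP_upper)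
    ultimately have "norm p ^ 2 \<le> s + \<epsilon> n" by linarith
    then show ?thesis using p(1) by blast
  qed
  have close: "norm (p - q) ^ 2 \<le> 8 * \<epsilon> n"
    if "G n \<subseteq> H" "p \<in> (\<Inter>i\<in>H. S i)" "norm p ^ 2 \<le> s + \<epsilon> n" "q \<in> (\<Inter>i\<in>G n. S i)" "norm q ^ 2 \<le> s + \<epsilon> n"
    for n H p q
  proof -
    have "convex (\<Inter>i\<in>G n. S i)" using convex G(1)[of n] by (intro convex_INT) (auto simp: \<F>_def)
    moreover have "p \<in> (\<Inter>i\<in>G n. S i)" using that(1,2) by blast
    ultimately have "norm (p - q) ^ 2 \<le> 2 * norm p ^ 2 + 2 * norm q ^ 2 - 4 * d (G n)"
      unfolding d_def using that(4) by (rule norm_diff_sq_le_inf_norm_sq)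
    then show ?thesis using that(3,5) G_d[of n] by linarith
  qed
  have "\<forall>n. \<exists>p\<in>(\<Inter>i\<in>G n. S i). norm p ^ 2 \<le> s + \<epsilon> n" using near_min G(1) by blast
  then obtain p where p: "\<And>n. p n \<in> (\<Inter>i\<in>G n. S i)" "\<And>n. norm (p n) ^ 2 \<le> s + \<epsilon> n"
    by metis
  define \<delta> where "\<delta> n = sqrt (8 * \<epsilon> n)" for n
  have \<delta>: "\<delta> \<longlonglongrightarrow> 0"
    unfolding \<delta>_def \<epsilon>_def using tendsto_real_sqrt[OF tendsto_mult_right_zero[OF LIMSEQ_inverse_real_of_nat, of 8]]
    by simp
  have le_\<delta>: "norm x \<le> \<delta> n" if "norm x ^ 2 \<le> 8 * \<epsilon> n" for x :: 'a and n
    unfolding \<delta>_def using that by (intro real_le_rsqrt)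
  have "Cauchy p"
  proof (rule Cauchy_if_tail_bound[OF _ \<delta>])
    fix m n :: nat assume "n \<le> m"
    then have "\<epsilon> m \<le> \<epsilon> n" by (simp add: \<epsilon>_def frac_le)
    then have "norm (p m) ^ 2 \<le> s + \<epsilon> n" using p(2)[of m] by linarith
    then show "norm (p m - p n) \<le> \<delta> n"
      using close[OF monoD[OF G(2) \<open>n \<le> m\<close>] p(1) _ p] by (intro le_\<delta>)
  qed
  then obtain P where P: "p \<longlonglongrightarrow> P" using Cauchy_convergent_iff convergent_def by blast
  have "P \<in> S i" if "i \<in> D" for i
  proof -
    have H: "insert i (G n) \<in> \<F>" for n using G(1) that by (simp add: \<F>_def)
    have "\<forall>n. \<exists>q\<in>(\<Inter>i\<in>insert i (G n). S i). norm q ^ 2 \<le> s + \<epsilon> n" using near_min H by blast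
    then obtain q where q: "\<And>n. q n \<in> (\<Inter>i\<in>insert i (G n). S i)" "\<And>n. norm (q n) ^ 2 \<le> s + \<epsilon> n"
      by metis
    show ?thesis
    proof (rule closed_contains_limit_of_near_sequence[OF closed[OF that] P _ _ \<delta>])
      show "q n \<in> S i" for n using q(1) by simp
      show "norm (q n - p n) \<le> \<delta> n" for n
        using close[OF _ q p] by (intro le_\<delta>) auto
    qed
  qed
  then show ?thesis by blast
qed

section \<open>One-point extension of Lipschitz maps\<close>

lemma Kirszbraun_balls:
  fixes f :: "'a::real_inner \<Rightarrow> 'b::{real_inner,complete_space}"
  assumes x0: "x0 \<notin> D"
    and lip: "\<And>x x'. x \<in> D \<Longrightarrow> x' \<in> D \<Longrightarrow> dist (f x) (f x') \<le> dist x x'"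
  shows "(\<Inter>x\<in>D. cball (f x) (dist x x0)) \<noteq> {}"
proof (cases "D = {}")
  case False
  then obtain x1 where "x1 \<in> D" by blast
  show ?thesis
  proof (rule closed_convex_finite_intersection_property[OF _ _ \<open>x1 \<in> D\<close>])
    fix F assume "finite F" "F \<subseteq> D"
    then show "(\<Inter>x\<in>F. cball (f x) (dist x x0)) \<noteq> {}"
      using x0 lip by (intro finite_Kirszbraun_balls) auto
  qed auto
qed simp

lemma K_lipschitz_on_extend_point:
  fixes f :: "'a::real_inner \<Rightarrow> 'b::{real_inner,complete_space}"
  assumes K: "K > 0" and lip: "K_lipschitz_on K D f"
  obtains y where "K_lipschitz_on K (insert x0 D) (f(x0 := y))"
proof (cases "x0 \<in> D")
  case True
  then show ?thesis using that[of "f x0"] lip by (simp add: insert_absorb)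
next
  case False
  define g where "g x = inverse K *\<^sub>R f x" for x
  have "dist (g x) (g x') \<le> dist x x'" if "x \<in> D" "x' \<in> D" for x x'
  proof -
    have "dist (g x) (g x') = norm (f x - f x') / K"
      using K by (simp add: g_def dist_norm divide_inverse_commute flip: scaleR_diff_right)
    also have "\<dots> \<le> dist x x'"
      using lip that K by (simp add: K_lipschitz_on_def dist_norm divide_le_eq mult.commute)
    finally show ?thesis .
  qed
  then have "(\<Inter>x\<in>D. cball (g x) (dist x x0)) \<noteq> {}" by (rule Kirszbraun_balls[OF False])
  then obtain z where "z \<in> (\<Inter>x\<in>D. cball (g x) (dist x x0))" by blast
  then have z: "\<And>x. x \<in> D \<Longrightarrow> dist (g x) z \<le> dist x x0" by simp
  have ext: "norm (f x - K *\<^sub>R z) \<le> K * norm (x - x0)" if "x \<in> D" for x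
  proof -
    have "f x - K *\<^sub>R z = K *\<^sub>R (g x - z)" using K by (simp add: g_def algebra_simps)
    then show ?thesis using z[OF that] K by (simp add: dist_norm)
  qed
  have "K_lipschitz_on K (insert x0 D) (f(x0 := K *\<^sub>R z))"
    unfolding K_lipschitz_on_def
  proof (intro ballI)
    fix a b assume "a \<in> insert x0 D" "b \<in> insert x0 D"
    then show "norm ((f(x0 := K *\<^sub>R z)) a - (f(x0 := K *\<^sub>R z)) b) \<le> K * norm (a - b)"
      using ext lip False unfolding K_lipschitz_on_def
      by (cases "a = x0"; cases "b = x0") (auto simp: norm_minus_commute)
  qed
  then show ?thesis by (rule that)
qed

section \<open>q-positive sets as graphs of Lipschitz maps\<close>

lemma qform_diff_nonneg_iff:
  fixes b c :: "'a::real_inner \<times> 'b::real_inner"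
  assumes "K > 0"
  shows "0 \<le> qform K (b - c) \<longleftrightarrow> norm (snd b - snd c) \<le> K * norm (fst b - fst c)"
proof -
  have "qform K (b - c) = ((K * norm (fst b - fst c))\<^sup>2 - (norm (snd b - snd c))\<^sup>2) / 2"
    by (simp add: qform_def bform_def power2_norm_eq_inner power_mult_distrib)
  then have "0 \<le> qform K (b - c) \<longleftrightarrow> (norm (snd b - snd c))\<^sup>2 \<le> (K * norm (fst b - fst c))\<^sup>2"
    by auto
  also have "\<dots> \<longleftrightarrow> norm (snd b - snd c) \<le> K * norm (fst b - fst c)"
    using assms by (simp add: power2_le_iff_abs_le)
  finally show ?thesis .
qed

lemma mem_graph_on_iff: "b \<in> graph_on D f \<longleftrightarrow> fst b \<in> D \<and> snd b = f (fst b)"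
  by (cases b) (auto simp: graph_on_def)

lemma graph_on_eq_image: "graph_on D f = (\<lambda>x. (x, f x)) ` D"
  by (auto simp: graph_on_def)

lemma fst_image_graph_on [simp]: "fst ` graph_on D f = D"
  by (simp add: graph_on_eq_image image_image)

lemma graph_on_fst_image_iff: "A = graph_on (fst ` A) f \<longleftrightarrow> (\<forall>b\<in>A. snd b = f (fst b))"
proof
  assume "A = graph_on (fst ` A) f"
  then show "\<forall>b\<in>A. snd b = f (fst b)" by (metis mem_graph_on_iff)
next
  assume graph: "\<forall>b\<in>A. snd b = f (fst b)"
  show "A = graph_on (fst ` A) f"
  proof (intro set_eqI iffI)
    fix b assume "b \<in> graph_on (fst ` A) f"
    then obtain c where "c \<in> A" "fst c = fst b" "snd b = f (fst b)" by (auto simp: mem_graph_on_iff)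
    then show "b \<in> A" using graph by (metis prod_eqI)
  qed (use graph in \<open>simp add: mem_graph_on_iff\<close>)
qed

lemma graph_on_insert_fun_upd:
  "x \<notin> D \<Longrightarrow> graph_on (insert x D) (f(x := y)) = insert (x, y) (graph_on D f)"
  by (auto simp: graph_on_def)

lemma q_positive_iff_K_lipschitz_graph:
  fixes A :: "('a::real_inner \<times> 'b::real_inner) set"
  assumes K: "K > 0" and "A \<noteq> {}"
  shows "q_positive (qform K) A \<longleftrightarrow> (\<exists>f. K_lipschitz_on K (fst ` A) f \<and> A = graph_on (fst ` A) f)"
proof
  assume "q_positive (qform K) A"
  then have cone: "norm (snd b - snd c) \<le> K * norm (fst b - fst c)" if "b \<in> A" "c \<in> A" for b c
    using that qform_diff_nonneg_iff[OF K] unfolding q_positive_def by blast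
  define f where "f x = (SOME y. (x, y) \<in> A)" for x
  have f_in: "(x, f x) \<in> A" if "x \<in> fst ` A" for x
    using that unfolding f_def by (force intro: someI)
  have "K_lipschitz_on K (fst ` A) f"
    unfolding K_lipschitz_on_def using cone[OF f_in f_in] by simp
  moreover have "snd b = f (fst b)" if "b \<in> A" for b
    using cone[OF that f_in, of "fst b"] that by simp
  ultimately show "\<exists>f. K_lipschitz_on K (fst ` A) f \<and> A = graph_on (fst ` A) f"
    by (auto simp: graph_on_fst_image_iff)
next
  assume "\<exists>f. K_lipschitz_on K (fst ` A) f \<and> A = graph_on (fst ` A) f"
  then obtain f where lip: "K_lipschitz_on K (fst ` A) f" and graph: "\<forall>b\<in>A. snd b = f (fst b)"
    by (auto simp: graph_on_fst_image_iff)
  have "norm (snd b - snd c) \<le> K * norm (fst b - fst c)" if "b \<in> A" "c \<in> A" for b c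
  proof -
    have "fst b \<in> fst ` A" "fst c \<in> fst ` A" using that by auto
    then show ?thesis using lip graph that unfolding K_lipschitz_on_def by simp
  qed
  then show "q_positive (qform K) A"
    using \<open>A \<noteq> {}\<close> qform_diff_nonneg_iff[OF K] unfolding q_positive_def by blast
qed

lemma q_positive_insert_point:
  fixes A :: "('a::real_inner \<times> 'b::{real_inner,complete_space}) set"
  assumes K: "K > 0" and qp: "q_positive (qform K) A" and x0: "x0 \<notin> fst ` A"
  obtains y where "q_positive (qform K) (insert (x0, y) A)"
proof -
  have "A \<noteq> {}" using qp by (simp add: q_positive_def)
  then obtain f where lip: "K_lipschitz_on K (fst ` A) f" and graph: "A = graph_on (fst ` A) f"
    using q_positive_iff_K_lipschitz_graph[OF K] qp by blast
  obtain y where lip': "K_lipschitz_on K (insert x0 (fst ` A)) (f(x0 := y))"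
    using K_lipschitz_on_extend_point[OF K lip] .
  define A' where "A' = insert (x0, y) A"
  have "A' = graph_on (insert x0 (fst ` A)) (f(x0 := y))"
    using x0 graph by (simp add: A'_def graph_on_insert_fun_upd)
  moreover have "fst ` A' = insert x0 (fst ` A)" by (simp add: A'_def)
  ultimately have "K_lipschitz_on K (fst ` A') (f(x0 := y)) \<and> A' = graph_on (fst ` A') (f(x0 := y))"
    using lip' by (simp only:)
  moreover have "A' \<noteq> {}" by (simp add: A'_def)
  ultimately have "q_positive (qform K) A'"
    using q_positive_iff_K_lipschitz_graph[OF K] by blast
  then show ?thesis unfolding A'_def by (rule that)
qed

lemma max_q_positive_iff_K_lipschitz_graph:
  fixes A :: "('a::real_inner \<times> 'b::{real_inner,complete_space}) set"
  assumes K: "K > 0"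
  shows "max_q_positive (qform K) A \<longleftrightarrow> (\<exists>f. K_lipschitz_on K UNIV f \<and> A = graph_on UNIV f)"
proof
  assume "max_q_positive (qform K) A"
  then have qp: "q_positive (qform K) A"
    and max: "\<And>A'. q_positive (qform K) A' \<Longrightarrow> A \<subseteq> A' \<Longrightarrow> A' = A"
    unfolding max_q_positive_def by auto
  have "x0 \<in> fst ` A" for x0
  proof (rule ccontr)
    assume x0: "x0 \<notin> fst ` A"
    then obtain y where "q_positive (qform K) (insert (x0, y) A)"
      using q_positive_insert_point[OF K qp] by blast
    then have "insert (x0, y) A = A" by (rule max) blast
    then have "(x0, y) \<in> A" by blast
    with x0 show False by (metis fst_conv image_eqI)
  qed
  then have fst_A: "fst ` A = UNIV" by blast
  have "A \<noteq> {}" using qp by (simp add: q_positive_def)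
  from q_positive_iff_K_lipschitz_graph[OF K this] qp
  show "\<exists>f. K_lipschitz_on K UNIV f \<and> A = graph_on UNIV f" unfolding fst_A by blast
next
  assume "\<exists>f. K_lipschitz_on K UNIV f \<and> A = graph_on UNIV f"
  then obtain f where lip: "K_lipschitz_on K UNIV f" and graph: "A = graph_on UNIV f" by blast
  have fst_A: "fst ` A = UNIV" by (simp add: graph)
  then have "A \<noteq> {}" by auto
  then have qp: "q_positive (qform K) A"
    using q_positive_iff_K_lipschitz_graph[OF K \<open>A \<noteq> {}\<close>] lip graph unfolding fst_A by blast
  have "A' \<subseteq> A" if qp': "q_positive (qform K) A'" and "A \<subseteq> A'" for A'
  proof
    fix b assume "b \<in> A'"
    moreover have "(fst b, f (fst b)) \<in> A'" using \<open>A \<subseteq> A'\<close> by (auto simp: graph mem_graph_on_iff)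
    ultimately have "norm (snd b - f (fst b)) \<le> 0"
      using qp' qform_diff_nonneg_iff[OF K, of b "(fst b, f (fst b))"] by (auto simp: q_positive_def)
    then show "b \<in> A" by (simp add: graph mem_graph_on_iff)
  qed
  then show "max_q_positive (qform K) A" using qp by (auto simp: max_q_positive_def)
qed

theorem mainTheorem17:
  fixes K :: real
  assumes "K > 0"
  shows "(\<forall>A :: ('a::{real_inner,complete_space} \<times> 'b::{real_inner,complete_space}) set.
           A \<noteq> {} \<longrightarrow>
           (q_positive (qform K) A \<longleftrightarrow>
             (\<exists>f. K_lipschitz_on K (fst ` A) f \<and> A = graph_on (fst ` A) f)))
         \<and> (\<forall>A :: ('a \<times> 'b) set.
           max_q_positive (qform K) A \<longleftrightarrow>
             (\<exists>f. K_lipschitz_on K UNIV f \<and> A = graph_on UNIV f))"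
  using q_positive_iff_K_lipschitz_graph[OF assms] max_q_positive_iff_K_lipschitz_graph[OF assms]
  by blast

end
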